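(* For plane binary tree shapes $t$ let $S_t$, $T$ be as in the context. Then \[ \sum_{\substack{t \in \mathcal{B}_{\le n}\\ |t| \ge \log_4 n}} \left(1 - \frac{[z^n]S_t(z)}{[z^n]T(z)}\right) = \Omega\!\left(\sqrt{n}\right) \quad \text{as } n\to\infty . \]
   Context: A plane binary tree is a rooted tree in which each node has a left and a right slot, each empty or holding a subtree; $\mathcal{B}_{\le n}$ is the set of (unlabeled) plane binary trees with at most $n$ nodes, and $|t|$ is the number of nodes. A plane increasing binary tree of size $n$ is a plane binary tree whose $n$ nodes are labeled $1,\dots,n$ increasingly along every path from the root; their exponential generating function is $T(z)=z/(1-z)$, so $[z^n]T(z)=1$. A fringe subtree is a node with all its descendants; its shape is obtained by forgetting labels. For a shape $t$ with $k$ nodes, $\ell(t)$ is its number of increasing labelings (equal to $k!$ divided by the product of the sizes of all fringe subtrees of $t$) and $w(t)=\ell(t)/k!$. $S_t(z)$ is the exponential generating function of plane increasing binary trees having no fringe subtree of shape $t$; it is the power series solution of $S_t'(z)=(1+S_t(z))^2-w(t)kz^{k-1}$, $S_t(0)=0$. *)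

theory Defs
  imports Complex_Main "HOL-Computational_Algebra.Formal_Power_Series" "HOL-Library.Landau_Symbols"
begin

datatype btree = E | N btree btree

fun bsize :: "btree \<Rightarrow> nat" where
  "bsize E = 0"
| "bsize (N l r) = Suc (bsize l + bsize r)"

fun hook :: "btree \<Rightarrow> nat" where
  "hook E = 1"
| "hook (N l r) = bsize (N l r) * hook l * hook r"

text \<open>Number of increasing labelings and the weight w(t) = l(t)/|t|!.\<close>
definition nlab :: "btree \<Rightarrow> real" where
  "nlab t = fact (bsize t) / real (hook t)"

definition wt :: "btree \<Rightarrow> real" where
  "wt t = nlab t / fact (bsize t)"

text \<open>EGF of plane increasing binary trees.\<close>
definition Tgf :: "real fps" where
  "Tgf = fps_X / (1 - fps_X)"

text \<open>EGF of plane increasing binary trees avoiding fringe subtree shape t: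
  the power series solution of S' = (1+S)^2 - w(t) k z^(k-1), S(0)=0, with k = |t|.\<close>
definition Sgf :: "btree \<Rightarrow> real fps" where
  "Sgf t = (THE S. fps_deriv S = (1 + S)^2 - fps_const (wt t * real (bsize t)) * fps_X ^ (bsize t - 1)
                 \<and> fps_nth S 0 = 0)"

end

theory Submission
  imports Defs "HOL-Real_Asymp.Real_Asymp"
begin

text \<open>
  Write \<open>k = |t|\<close> and \<open>w = w(t) = 1 / hook t\<close>. Comparing coefficients in the differential
  equation for \<open>S\<^sub>t\<close> gives a quadratic recursion for the deficit
  \<open>d\<^sub>n = 1 - [z\<^sup>n] S\<^sub>t(z)\<close>: it vanishes below \<open>k\<close>, equals \<open>w\<close> at \<open>k\<close>, and then grows
  linearly; as long as \<open>w (n + 1) \<le> 1\<close> it is at least \<open>w (n + 1) / ((k + 1) (k + 2))\<close>.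
  Since \<open>2\<^sup>k \<le> 2 hook(t)\<^sup>2\<close>, this regime covers every tree of size \<open>k \<ge> 2 log\<^sub>2 n + O(1)\<close>,
  and the weights of the trees of size \<open>k\<close> sum to \<open>[z\<^sup>k] T(z) = 1\<close>. Summing over these
  sizes, the bounds \<open>(n + 1) / ((k + 1) (k + 2))\<close> telescope to \<open>n / (2 log\<^sub>2 n + O(1))\<close>,
  far more than \<open>\<surd>n\<close>.
\<close>

section \<open>The Riccati recursion\<close>

text \<open>\<open>riccati_coeff c k n\<close> is \<open>[z^n] (1 + S(z))\<close> for the solution of
  \<open>S' = (1 + S)^2 - c z^(k-1)\<close>, \<open>S(0) = 0\<close>; the recursion compares the coefficients of \<open>z^(n-1)\<close>.\<close>
function riccati_coeff :: "real \<Rightarrow> nat \<Rightarrow> nat \<Rightarrow> real" where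
  "riccati_coeff c k n =
     (if n = 0 then 1
      else ((\<Sum>i<n. riccati_coeff c k i * riccati_coeff c k (n - 1 - i)) - (if n = k then c else 0))
           / real n)"
  by pat_completeness auto
termination by (relation "measure (\<lambda>(c, k, n). n)") auto

declare riccati_coeff.simps [simp del]

definition riccati_fps :: "real \<Rightarrow> nat \<Rightarrow> real fps" where
  "riccati_fps c k = Abs_fps (riccati_coeff c k) - 1"

lemma riccati_coeff_0 [simp]: "riccati_coeff c k 0 = 1"
  by (simp add: riccati_coeff.simps)

lemma riccati_coeff_rec:
  assumes "n \<ge> 1"
  shows "real n * riccati_coeff c k n
           = (\<Sum>i<n. riccati_coeff c k i * riccati_coeff c k (n - 1 - i)) - (if n = k then c else 0)"
  using assms by (subst riccati_coeff.simps) simp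

lemma fps_nth_riccati_fps: "fps_nth (riccati_fps c k) n = (if n = 0 then 0 else riccati_coeff c k n)"
  by (simp add: riccati_fps_def)

lemma fps_deriv_riccati_fps:
  assumes "k = 0 \<Longrightarrow> c = 0"
  shows "fps_deriv (riccati_fps c k) = (1 + riccati_fps c k)^2 - fps_const c * fps_X ^ (k - 1)"
proof (rule fps_ext)
  fix n
  have "fps_nth ((1 + riccati_fps c k)^2) n = (\<Sum>i<Suc n. riccati_coeff c k i * riccati_coeff c k (n - i))"
    by (simp add: riccati_fps_def power2_eq_square fps_mult_nth atLeast0AtMost lessThan_Suc_atMost)
  then show "fps_nth (fps_deriv (riccati_fps c k)) n
               = fps_nth ((1 + riccati_fps c k)^2 - fps_const c * fps_X ^ (k - 1)) n"
    using riccati_coeff_rec[of "Suc n" c k] assms by (auto simp: fps_nth_riccati_fps)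
qed

lemma fps_riccati_unique:
  fixes F G H :: "'a::field_char_0 fps"
  assumes F: "fps_deriv F = (1 + F)^2 - H" and G: "fps_deriv G = (1 + G)^2 - H"
    and "fps_nth F 0 = fps_nth G 0"
  shows "F = G"
proof (rule fps_ext)
  fix n show "fps_nth F n = fps_nth G n"
  proof (induction n rule: less_induct)
    case (less n)
    show ?case
    proof (cases n)
      case 0
      with assms(3) show ?thesis by simp
    next
      case (Suc m)
      have "fps_nth ((1 + F)^2) m = fps_nth ((1 + G)^2) m"
        unfolding power2_eq_square fps_mult_nth by (intro sum.cong refl) (simp add: less Suc)
      then have "fps_nth (fps_deriv F) m = fps_nth (fps_deriv G) m"
        using F G by simp
      then show ?thesis
        using Suc by (simp del: of_nat_Suc)
    qed
  qed
qed

lemma Sgf_eq_riccati_fps: "Sgf t = riccati_fps (wt t * real (bsize t)) (bsize t)"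
proof -
  let ?c = "wt t * real (bsize t)" and ?k = "bsize t"
  let ?H = "fps_const ?c * fps_X ^ (?k - 1)"
  have R: "fps_deriv (riccati_fps ?c ?k) = (1 + riccati_fps ?c ?k)^2 - ?H"
    by (rule fps_deriv_riccati_fps) simp
  show ?thesis
    unfolding Sgf_def
  proof (rule the_equality)
    show "fps_deriv (riccati_fps ?c ?k) = (1 + riccati_fps ?c ?k)^2 - ?H
            \<and> fps_nth (riccati_fps ?c ?k) 0 = 0"
      using R by (simp add: fps_nth_riccati_fps)
    show "S = riccati_fps ?c ?k" if "fps_deriv S = (1 + S)^2 - ?H \<and> fps_nth S 0 = 0" for S
      using fps_riccati_unique[of S ?H "riccati_fps ?c ?k"] that R by (simp add: fps_nth_riccati_fps)
  qed
qed

lemma riccati_coeff_below: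
  assumes "n < k"
  shows "riccati_coeff c k n = 1"
  using assms
proof (induction n rule: less_induct)
  case (less n)
  have "real n * riccati_coeff c k n = real n" if "n \<ge> 1"
    using riccati_coeff_rec[OF that, of c k] less by simp
  then show ?case by (cases "n = 0") auto
qed

lemma riccati_coeff_self:
  assumes "k \<ge> 1"
  shows "riccati_coeff c k k = 1 - c / real k"
  using riccati_coeff_rec[OF assms, of c k] assms by (simp add: riccati_coeff_below field_simps)

lemma riccati_coeff_bounds:
  assumes "0 \<le> c" "c \<le> real k"
  shows "0 \<le> riccati_coeff c k n \<and> riccati_coeff c k n \<le> 1"
proof (induction n rule: less_induct)
  case (less n)
  show ?case
  proof (cases "n = 0")
    case False
    let ?s = "\<Sum>i<n. riccati_coeff c k i * riccati_coeff c k (n - 1 - i)"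
    have "0 \<le> ?s"
      using less by (intro sum_nonneg) simp
    moreover have "?s \<le> (\<Sum>i<n. 1)"
      using less by (intro sum_mono mult_le_one) auto
    moreover have "?s = real n" if "n = k"
      using that by (simp add: riccati_coeff_below)
    ultimately have "0 \<le> real n * riccati_coeff c k n \<and> real n * riccati_coeff c k n \<le> real n * 1"
      using riccati_coeff_rec[of n c k] False assms by auto
    then show ?thesis
      using False by (simp add: zero_le_mult_iff)
  qed simp
qed

section \<open>Growth of the deficit\<close>

definition riccati_deficit :: "real \<Rightarrow> nat \<Rightarrow> nat \<Rightarrow> real" where
  "riccati_deficit c k n = 1 - riccati_coeff c k n"

lemma riccati_deficit_rec:
  assumes "n \<ge> 1"
  shows "real n * riccati_deficit c k n
           = 2 * (\<Sum>i<n. riccati_deficit c k i)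
             - (\<Sum>i<n. riccati_deficit c k i * riccati_deficit c k (n - 1 - i))
             + (if n = k then c else 0)"
proof -
  let ?d = "riccati_deficit c k"
  have reflect: "(\<Sum>i<n. ?d (n - 1 - i)) = (\<Sum>i<n. ?d i)"
    using sum.nat_diff_reindex[of ?d n] by simp
  have "(\<Sum>i<n. riccati_coeff c k i * riccati_coeff c k (n - 1 - i))
          = (\<Sum>i<n. 1 - ?d i - ?d (n - 1 - i) + ?d i * ?d (n - 1 - i))"
    by (intro sum.cong refl) (simp add: riccati_deficit_def algebra_simps)
  also have "\<dots> = real n - 2 * (\<Sum>i<n. ?d i) + (\<Sum>i<n. ?d i * ?d (n - 1 - i))"
    using reflect by (simp add: sum.distrib sum_subtractf)
  finally show ?thesis
    using riccati_coeff_rec[OF assms, of c k] by (simp add: riccati_deficit_def algebra_simps)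
qed

lemma riccati_deficit_below: "n < k \<Longrightarrow> riccati_deficit c k n = 0"
  by (simp add: riccati_deficit_def riccati_coeff_below)

lemma riccati_deficit_self: "k \<ge> 1 \<Longrightarrow> riccati_deficit c k k = c / real k"
  by (simp add: riccati_deficit_def riccati_coeff_self)

lemma riccati_deficit_bounds:
  "0 \<le> c \<Longrightarrow> c \<le> real k \<Longrightarrow> 0 \<le> riccati_deficit c k n \<and> riccati_deficit c k n \<le> 1"
  using riccati_coeff_bounds[of c k n] by (simp add: riccati_deficit_def)

lemma sum_lessThan_Suc_real: "(\<Sum>i<m. real i + 1) = real m * (real m + 1) / 2"
  by (induction m) (simp_all add: field_simps)

lemma sum_lessThan_Suc_sq_real: "(\<Sum>i<m. (real i + 1)^2) = real m * (real m + 1) * (2 * real m + 1) / 6"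
  by (induction m) (simp_all add: field_simps power2_eq_square)

lemma sum_lessThan_Suc_times_complement_real:
  "(\<Sum>i<m. (real i + 1) * (real m - real i)) = real m * (real m + 1) * (real m + 2) / 6"
proof -
  have "(\<Sum>i<m. (real i + 1) * (real m - real i))
          = (\<Sum>i<m. real m * (real i + 1) - ((real i + 1)^2 - (real i + 1)))"
    by (intro sum.cong refl) (simp add: algebra_simps power2_eq_square)
  also have "\<dots> = real m * (\<Sum>i<m. real i + 1) - (\<Sum>i<m. (real i + 1)^2) + (\<Sum>i<m. real i + 1)"
    by (simp add: sum_subtractf sum_distrib_left)
  finally show ?thesis
    by (simp only: sum_lessThan_Suc_real sum_lessThan_Suc_sq_real) (simp add: field_simps)
qed

lemma riccati_deficit_le:
  assumes k: "k \<ge> 1" and w: "0 \<le> w" "w \<le> 1"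
  shows "riccati_deficit (w * real k) k n \<le> w / (real k + 1) * (real n + 1)"
proof (induction n rule: less_induct)
  case (less n)
  let ?d = "riccati_deficit (w * real k) k"
  define \<beta> where "\<beta> = w / (real k + 1)"
  consider "n = 0" | "n = k" | "n \<ge> 1" "n \<noteq> k" by linarith
  then show ?case
  proof cases
    case 1
    then show ?thesis using w by (simp add: riccati_deficit_def)
  next
    case 2
    then show ?thesis using k w by (simp add: riccati_deficit_self)
  next
    case 3
    have "0 \<le> (\<Sum>i<n. ?d i * ?d (n - 1 - i))"
      using riccati_deficit_bounds[of "w * real k" k] k w
      by (intro sum_nonneg) (simp add: mult_left_le_one_le)
    moreover have "(\<Sum>i<n. ?d i) \<le> (\<Sum>i<n. \<beta> * (real i + 1))"
      using less.IH by (intro sum_mono) (simp add: \<beta>_def)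
    moreover have "(\<Sum>i<n. \<beta> * (real i + 1)) = \<beta> * (real n * (real n + 1) / 2)"
      by (simp only: sum_distrib_left[symmetric] sum_lessThan_Suc_real)
    ultimately have "real n * ?d n \<le> real n * (\<beta> * (real n + 1))"
      using riccati_deficit_rec[of n "w * real k" k] 3 by (simp add: algebra_simps)
    then have "?d n \<le> \<beta> * (real n + 1)"
      using 3 by (simp add: mult_le_cancel_left_pos)
    then show ?thesis
      by (simp add: \<beta>_def)
  qed
qed

lemma sum_piecewise_quadratic_ge:
  fixes a \<gamma> w :: real
  assumes "Suc k \<le> m" "0 \<le> \<gamma>"
  shows "w + a * (real m * (real m + 1) - (real k + 1) * (real k + 2)) / 2
           - \<gamma> * (real m * (real m + 1) * (2 * real m + 1) / 6)
         \<le> (\<Sum>i<m. if i < k then 0 else if i = k then w else a * (real i + 1) - \<gamma> * (real i + 1)^2)"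
  using assms(1)
proof (induction m rule: dec_induct)
  case base
  have "0 \<le> \<gamma> * (real (Suc k) * (real (Suc k) + 1) * (2 * real (Suc k) + 1) / 6)"
    using assms(2) by simp
  then show ?case
    by (simp add: algebra_simps)
next
  case (step m)
  then show ?case
    by (simp add: field_simps power2_eq_square)
qed

lemma riccati_deficit_ge_quadratic:
  assumes k: "k \<ge> 1" and w: "0 \<le> w" "w \<le> 1" and "m > k"
  shows "2 * w / ((real k + 1) * (real k + 2)) * (real m + 1) - w^2 / (2 * (real k + 1)^2) * (real m + 1)^2
           \<le> riccati_deficit (w * real k) k m"
  using \<open>m > k\<close>
proof (induction m rule: less_induct)
  case (less m)
  let ?d = "riccati_deficit (w * real k) k"
  define a where "a = 2 * w / ((real k + 1) * (real k + 2))"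
  define \<gamma> where "\<gamma> = w^2 / (2 * (real k + 1)^2)"
  define \<beta> where "\<beta> = w / (real k + 1)"
  \<comment> \<open>\<open>a (k + 1) (k + 2) = 2 w\<close> and \<open>\<beta>\<^sup>2 = 2 \<gamma>\<close> make the recursion reproduce the minorant exactly.\<close>
  have "w + a * (real m * (real m + 1) - (real k + 1) * (real k + 2)) / 2
          - \<gamma> * (real m * (real m + 1) * (2 * real m + 1) / 6)
        \<le> (\<Sum>i<m. if i < k then 0 else if i = k then w else a * (real i + 1) - \<gamma> * (real i + 1)^2)"
    using less.prems by (intro sum_piecewise_quadratic_ge) (auto simp: \<gamma>_def)
  also have "\<dots> \<le> (\<Sum>i<m. ?d i)"
    using less.IH k by (intro sum_mono) (auto simp: riccati_deficit_below riccati_deficit_self a_def \<gamma>_def)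
  finally have linear_part: "w + a * (real m * (real m + 1) - (real k + 1) * (real k + 2)) / 2
          - \<gamma> * (real m * (real m + 1) * (2 * real m + 1) / 6) \<le> (\<Sum>i<m. ?d i)" .
  have "(\<Sum>i<m. ?d i * ?d (m - 1 - i)) \<le> (\<Sum>i<m. (\<beta> * (real i + 1)) * (\<beta> * (real m - real i)))"
  proof (intro sum_mono mult_mono)
    fix i assume i: "i \<in> {..<m}"
    show "?d i \<le> \<beta> * (real i + 1)"
      using riccati_deficit_le[OF k w] by (simp add: \<beta>_def)
    show "?d (m - 1 - i) \<le> \<beta> * (real m - real i)"
      using riccati_deficit_le[OF k w, of "m - 1 - i"] i by (simp add: \<beta>_def of_nat_diff)
    show "0 \<le> \<beta> * (real i + 1)"
      using w by (simp add: \<beta>_def)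
    show "0 \<le> ?d (m - 1 - i)"
      using riccati_deficit_bounds[of "w * real k" k] k w by (simp add: mult_left_le_one_le)
  qed
  also have "\<dots> = \<beta>^2 * (\<Sum>i<m. (real i + 1) * (real m - real i))"
    by (simp add: sum_distrib_left power2_eq_square algebra_simps)
  also have "\<dots> = 2 * \<gamma> * (real m * (real m + 1) * (real m + 2) / 6)"
    by (simp add: sum_lessThan_Suc_times_complement_real \<beta>_def \<gamma>_def power_divide)
  finally have quadratic_part: "(\<Sum>i<m. ?d i * ?d (m - 1 - i))
      \<le> 2 * \<gamma> * (real m * (real m + 1) * (real m + 2) / 6)" .
  have "a * ((real k + 1) * (real k + 2)) = 2 * w"
    by (simp add: a_def)
  then have "2 * (w + a * (real m * (real m + 1) - (real k + 1) * (real k + 2)) / 2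
             - \<gamma> * (real m * (real m + 1) * (2 * real m + 1) / 6))
           - 2 * \<gamma> * (real m * (real m + 1) * (real m + 2) / 6)
         = real m * (a * (real m + 1) - \<gamma> * (real m + 1)^2)"
    by (simp add: field_simps power2_eq_square)
  then have "real m * (a * (real m + 1) - \<gamma> * (real m + 1)^2) \<le> real m * ?d m"
    using riccati_deficit_rec[of m "w * real k" k] less.prems linear_part quadratic_part by simp
  then show ?case
    using less.prems by (simp add: a_def \<gamma>_def mult_le_cancel_left_pos)
qed

lemma riccati_deficit_ge_linear:
  assumes k: "k \<ge> 1" and w: "0 \<le> w" "w \<le> 1" and "m > k" and small: "w * (real m + 1) \<le> 1"
  shows "w * (real m + 1) / ((real k + 1) * (real k + 2)) \<le> riccati_deficit (w * real k) k m"
proof -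
  define x where "x = w * (real m + 1)"
  have "x \<ge> 0"
    using w by (simp add: x_def)
  have "w^2 / (2 * (real k + 1)^2) * (real m + 1)^2 = x * x / (2 * (real k + 1)^2)"
    by (simp add: x_def power2_eq_square)
  also have "\<dots> \<le> x / (2 * (real k + 1)^2)"
    using \<open>x \<ge> 0\<close> small by (intro divide_right_mono mult_left_le) (auto simp: x_def)
  also have "\<dots> \<le> x / ((real k + 1) * (real k + 2))"
    using \<open>x \<ge> 0\<close> by (intro divide_left_mono) (auto simp: power2_eq_square)
  finally have "w^2 / (2 * (real k + 1)^2) * (real m + 1)^2 \<le> x / ((real k + 1) * (real k + 2))" .
  moreover have "2 * w / ((real k + 1) * (real k + 2)) * (real m + 1) = 2 * (x / ((real k + 1) * (real k + 2)))"
    by (simp add: x_def)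
  ultimately show ?thesis
    using riccati_deficit_ge_quadratic[OF assms(1-4)] by (simp add: x_def)
qed

section \<open>Hook products of plane binary trees\<close>

lemma hook_pos: "hook t \<ge> 1"
  by (induction t) auto

lemma wt_eq: "wt t = 1 / real (hook t)"
  by (simp add: wt_def nlab_def)

lemma wt_bounds: "0 < wt t \<and> wt t \<le> 1"
  using hook_pos[of t] by (simp add: wt_eq)

lemma bsize_eq_0_iff: "bsize t = 0 \<longleftrightarrow> t = E"
  by (cases t) auto

lemma two_pow_bsize_le_hook_sq: "2 ^ bsize t \<le> 2 * hook t ^ 2"
proof (induction t)
  case (N l r)
  let ?k = "bsize (N l r)"
  show ?case
  proof (cases "l = E \<and> r = E")
    case False
    then have "4 \<le> ?k^2"
      using bsize_eq_0_iff[of l] bsize_eq_0_iff[of r] power_mono[of 2 ?k 2] by auto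
    have "(2::nat) ^ ?k = 2 * (2 ^ bsize l * 2 ^ bsize r)"
      by (simp add: power_add)
    also have "\<dots> \<le> 2 * ((2 * hook l ^ 2) * (2 * hook r ^ 2))"
      using N.IH by (intro mult_le_mono2 mult_le_mono)
    also have "\<dots> = 2 * (4 * (hook l * hook r)^2)"
      by (simp add: power_mult_distrib)
    also have "\<dots> \<le> 2 * (?k^2 * (hook l * hook r)^2)"
      using \<open>4 \<le> ?k^2\<close> by simp
    also have "\<dots> = 2 * hook (N l r) ^ 2"
      by (simp only: hook.simps power_mult_distrib mult.assoc)
    finally show ?thesis .
  qed simp
qed simp

lemma finite_bsize_le: "finite {t. bsize t \<le> n}"
proof (induction n)
  case 0
  then show ?case
    by (simp add: bsize_eq_0_iff)
next
  case (Suc n)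
  have "{t. bsize t \<le> Suc n} \<subseteq> insert E (case_prod N ` ({t. bsize t \<le> n} \<times> {t. bsize t \<le> n}))"
  proof
    fix t assume "t \<in> {t. bsize t \<le> Suc n}"
    then show "t \<in> insert E (case_prod N ` ({t. bsize t \<le> n} \<times> {t. bsize t \<le> n}))"
      by (cases t) auto
  qed
  then show ?case
    by (rule finite_subset) (simp add: Suc)
qed

lemma finite_bsize_eq: "finite {t. bsize t = n}"
  by (rule finite_subset[OF _ finite_bsize_le[of n]]) auto

lemma sum_bsize_in:
  assumes "finite I"
  shows "(\<Sum>t | bsize t \<in> I. f t) = (\<Sum>k\<in>I. \<Sum>t | bsize t = k. f t)"
proof -
  have "{t. bsize t \<in> I} = (\<Union>k\<in>I. {t. bsize t = k})"
    by auto
  then show ?thesis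
    by (simp only:) (rule sum.UNION_disjoint[OF assms], auto simp: finite_bsize_eq)
qed

lemma sum_bsize_Suc:
  "(\<Sum>t | bsize t = Suc j. f t) = (\<Sum>i\<le>j. \<Sum>l | bsize l = i. \<Sum>r | bsize r = j - i. f (N l r))"
proof -
  define P where "P = (SIGMA l:{l. bsize l \<le> j}. {r. bsize r = j - bsize l})"
  have "{t. bsize t = Suc j} = case_prod N ` P"
  proof
    show "{t. bsize t = Suc j} \<subseteq> case_prod N ` P"
    proof
      fix t assume "t \<in> {t. bsize t = Suc j}"
      then show "t \<in> case_prod N ` P"
        by (cases t) (auto simp: P_def image_iff)
    qed
  qed (auto simp: P_def)
  moreover have "inj_on (case_prod N) P"
    by (auto simp: inj_on_def)
  ultimately have "(\<Sum>t | bsize t = Suc j. f t) = (\<Sum>(l, r)\<in>P. f (N l r))"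
    by (simp add: sum.reindex case_prod_unfold)
  also have "\<dots> = (\<Sum>l | bsize l \<in> {..j}. \<Sum>r | bsize r = j - bsize l. f (N l r))"
    unfolding P_def by (subst sum.Sigma) (auto simp: finite_bsize_le finite_bsize_eq)
  also have "\<dots> = (\<Sum>i\<le>j. \<Sum>l | bsize l = i. \<Sum>r | bsize r = j - bsize l. f (N l r))"
    by (simp only: sum_bsize_in finite_atMost)
  also have "\<dots> = (\<Sum>i\<le>j. \<Sum>l | bsize l = i. \<Sum>r | bsize r = j - i. f (N l r))"
    by (intro sum.cong refl) simp
  finally show ?thesis .
qed

lemma sum_wt_bsize_eq: "(\<Sum>t | bsize t = k. wt t) = 1"
  unfolding wt_eq
proof (induction k rule: less_induct)
  case (less k)
  show ?case
  proof (cases k)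
    case 0
    then show ?thesis
      by (simp add: bsize_eq_0_iff)
  next
    case (Suc j)
    have "(\<Sum>t | bsize t = k. 1 / real (hook t))
            = (\<Sum>i\<le>j. \<Sum>l | bsize l = i. \<Sum>r | bsize r = j - i.
                 1 / real k * (1 / real (hook l)) * (1 / real (hook r)))"
      unfolding Suc sum_bsize_Suc
      by (intro sum.cong refl) (auto simp: algebra_simps)
    also have "\<dots> = (\<Sum>i\<le>j. \<Sum>l | bsize l = i. 1 / real k * (1 / real (hook l)))"
      by (intro sum.cong refl, simp only: sum_distrib_left[symmetric]) (simp add: less.IH Suc)
    also have "\<dots> = (\<Sum>i\<le>j. 1 / real k)"
      by (intro sum.cong refl, simp only: sum_distrib_left[symmetric]) (simp add: less.IH Suc)
    also have "\<dots> = 1"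
      using Suc by simp
    finally show ?thesis .
  qed
qed

section \<open>The lower bound\<close>

lemma Tgf_nth: "fps_nth Tgf n = (if n = 0 then 0 else 1)"
proof -
  have "inverse (1 - fps_X) = Abs_fps (\<lambda>_. 1::real)"
    by (metis fps_inverse_gp' fps_inverse_idempotent fps_inverse_eq_0_iff fps_nth_Abs_fps one_neq_zero)
  then have Tgf: "Tgf = fps_X * Abs_fps (\<lambda>_. 1)"
    by (simp add: Tgf_def fps_divide_unit)
  show ?thesis
    unfolding Tgf by (simp add: fps_X_mult_nth)
qed

lemma one_minus_Sgf_div_Tgf:
  assumes "n \<ge> 1"
  shows "1 - fps_nth (Sgf t) n / fps_nth Tgf n = riccati_deficit (wt t * real (bsize t)) (bsize t) n"
  using assms by (simp add: Tgf_nth Sgf_eq_riccati_fps fps_nth_riccati_fps riccati_deficit_def)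

lemma one_minus_Sgf_div_Tgf_nonneg: "n \<ge> 1 \<Longrightarrow> 0 \<le> 1 - fps_nth (Sgf t) n / fps_nth Tgf n"
  using riccati_deficit_bounds[of "wt t * real (bsize t)" "bsize t" n] wt_bounds[of t]
  by (simp add: one_minus_Sgf_div_Tgf mult_left_le_one_le)

lemma sum_bsize_eq_one_minus_Sgf_div_Tgf_ge:
  assumes "1 \<le> k" "k < n" and large: "2 * (real n + 1)^2 \<le> 2 ^ k"
  shows "(real n + 1) / ((real k + 1) * (real k + 2))
           \<le> (\<Sum>t | bsize t = k. 1 - fps_nth (Sgf t) n / fps_nth Tgf n)"
proof -
  have "(real n + 1) / ((real k + 1) * (real k + 2)) * wt t
          \<le> 1 - fps_nth (Sgf t) n / fps_nth Tgf n" if "bsize t = k" for t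
  proof -
    have "real (2 ^ k) \<le> real (2 * hook t ^ 2)"
      using two_pow_bsize_le_hook_sq[of t] that by (simp only: of_nat_le_iff)
    then have "2 ^ k \<le> 2 * real (hook t) ^ 2"
      by simp
    then have "(real n + 1)^2 \<le> real (hook t) ^ 2"
      using large by linarith
    then have "real n + 1 \<le> real (hook t)"
      by (rule power2_le_imp_le) simp
    then have "wt t * (real n + 1) \<le> 1"
      using hook_pos[of t] by (simp add: wt_eq)
    then show ?thesis
      using riccati_deficit_ge_linear[of k "wt t" n] that assms wt_bounds[of t]
      by (simp add: one_minus_Sgf_div_Tgf mult.commute)
  qed
  then have "(\<Sum>t | bsize t = k. (real n + 1) / ((real k + 1) * (real k + 2)) * wt t)
               \<le> (\<Sum>t | bsize t = k. 1 - fps_nth (Sgf t) n / fps_nth Tgf n)"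
    by (intro sum_mono) simp
  then show ?thesis
    by (simp only: sum_distrib_left[symmetric] sum_wt_bsize_eq mult_1_right)
qed

lemma sum_inverse_consecutive_product:
  assumes "K \<le> n"
  shows "(\<Sum>k = K..<n. 1 / ((real k + 1) * (real k + 2))) = 1 / (real K + 1) - 1 / (real n + 1)"
proof -
  have "(\<Sum>k = K..<n. 1 / ((real k + 1) * (real k + 2)))
          = (\<Sum>k = K..<n. (- 1 / (real (Suc k) + 1)) - (- 1 / (real k + 1)))"
    by (intro sum.cong refl) (simp add: field_simps)
  also have "\<dots> = - 1 / (real n + 1) - (- 1 / (real K + 1))"
    by (rule sum_Suc_diff'[OF assms])
  finally show ?thesis
    by simp
qed

lemma two_sq_le_two_pow:
  assumes "2 * log 2 (real n + 1) + 1 \<le> real k"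
  shows "2 * (real n + 1)^2 \<le> 2 ^ k"
proof -
  have "2 powr (2 * log 2 (real n + 1) + 1) = 2 powr (log 2 (real n + 1)) * 2 powr (log 2 (real n + 1)) * 2"
    by (simp only: mult_2 powr_add) simp
  then have "2 * (real n + 1)^2 = 2 powr (2 * log 2 (real n + 1) + 1)"
    by (simp add: power2_eq_square)
  also have "\<dots> \<le> 2 powr real k"
    using assms by (intro powr_mono) auto
  finally show ?thesis
    by (simp add: powr_realpow)
qed

lemma sum_bsize_range_one_minus_Sgf_div_Tgf_ge:
  assumes "1 \<le> K" "K \<le> n" and large: "2 * log 2 (real n + 1) + 1 \<le> real K"
  shows "(real n + 1) / (real K + 1) - 1
           \<le> (\<Sum>t | bsize t \<in> {K..<n}. 1 - fps_nth (Sgf t) n / fps_nth Tgf n)"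
proof -
  have "(real n + 1) / (real K + 1) - 1 = (real n + 1) * (\<Sum>k = K..<n. 1 / ((real k + 1) * (real k + 2)))"
    by (simp only: sum_inverse_consecutive_product[OF assms(2)]) (simp add: right_diff_distrib)
  also have "\<dots> = (\<Sum>k = K..<n. (real n + 1) / ((real k + 1) * (real k + 2)))"
    by (simp add: sum_distrib_left)
  also have "\<dots> \<le> (\<Sum>k = K..<n. \<Sum>t | bsize t = k. 1 - fps_nth (Sgf t) n / fps_nth Tgf n)"
    using assms(1) large
    by (intro sum_mono sum_bsize_eq_one_minus_Sgf_div_Tgf_ge two_sq_le_two_pow) auto
  also have "\<dots> = (\<Sum>t | bsize t \<in> {K..<n}. 1 - fps_nth (Sgf t) n / fps_nth Tgf n)"
    by (rule sum_bsize_in[symmetric]) simp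
  finally show ?thesis .
qed

lemma sum_one_minus_Sgf_div_Tgf_ge:
  fixes n :: nat
  assumes "n \<ge> 2" and n_large: "2 * log 2 (real n + 1) + 2 \<le> real n"
  shows "(real n + 1) / (2 * log 2 (real n + 1) + 3) - 1
           \<le> (\<Sum>t\<in>{t. bsize t \<le> n \<and> real (bsize t) \<ge> log 4 (real n)}.
                 1 - fps_nth (Sgf t) n / fps_nth Tgf n)"
proof -
  define x where "x = 2 * log 2 (real n + 1) + 1"
  define K where "K = nat \<lceil>x\<rceil>"
  let ?f = "\<lambda>t. 1 - fps_nth (Sgf t) n / fps_nth Tgf n"
  let ?S = "{t. bsize t \<le> n \<and> real (bsize t) \<ge> log 4 (real n)}"
  have "1 \<le> x"
    by (simp add: x_def)
  then have "x \<le> real K" "real K \<le> x + 1"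
    using of_int_ceiling_le_add_one[of x] by (auto simp: K_def)
  moreover have "x + 1 \<le> real n"
    using n_large by (simp add: x_def)
  ultimately have K: "x \<le> real K" "real K \<le> x + 1" "1 \<le> K" "K \<le> n"
    using \<open>1 \<le> x\<close> by linarith+
  have "log 4 (real n) = log 2 (real n) / 2"
    using log_base_pow[of "2::real" 2 "real n"] by simp
  also have "\<dots> \<le> log 2 (real n + 1)"
  proof -
    have "0 \<le> log 2 (real n)" "log 2 (real n) \<le> log 2 (real n + 1)"
      using assms(1) by simp_all
    then show ?thesis
      by linarith
  qed
  also have "\<dots> \<le> x"
    using \<open>1 \<le> x\<close> by (simp add: x_def)
  finally have "log 4 (real n) \<le> x" .
  have "{t. bsize t \<in> {K..<n}} \<subseteq> ?S"
  proof
    fix t assume "t \<in> {t. bsize t \<in> {K..<n}}"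
    then have "real K \<le> real (bsize t)" "bsize t < n"
      by simp_all
    moreover have "log 4 (real n) \<le> real (bsize t)"
      using \<open>log 4 (real n) \<le> x\<close> K(1) calculation(1) by linarith
    ultimately show "t \<in> ?S"
      by (simp only: mem_Collect_eq) (blast intro: less_imp_le)
  qed
  then have "(\<Sum>t | bsize t \<in> {K..<n}. ?f t) \<le> (\<Sum>t\<in>?S. ?f t)"
    using one_minus_Sgf_div_Tgf_nonneg assms(1)
    by (intro sum_mono2) (auto intro: finite_subset[OF _ finite_bsize_le])
  moreover have "(real n + 1) / (real K + 1) - 1 \<le> (\<Sum>t | bsize t \<in> {K..<n}. ?f t)"
    using K by (intro sum_bsize_range_one_minus_Sgf_div_Tgf_ge) (simp_all add: x_def)
  moreover have "(real n + 1) / (2 * log 2 (real n + 1) + 3) \<le> (real n + 1) / (real K + 1)"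
    using K \<open>1 \<le> x\<close> by (intro divide_left_mono) (auto simp: x_def)
  ultimately show ?thesis
    by linarith
qed

theorem proposition3p11:
  shows "(\<lambda>n::nat. \<Sum>t\<in>{t. bsize t \<le> n \<and> real (bsize t) \<ge> log 4 (real n)}.
            1 - fps_nth (Sgf t) n / fps_nth Tgf n) \<in> \<Omega>(\<lambda>n. sqrt (real n))"
proof (rule landau_omega.bigI[of 1])
  have "eventually (\<lambda>n::nat. sqrt (real n) \<le> (real n + 1) / (2 * log 2 (real n + 1) + 3) - 1) at_top"
    and "eventually (\<lambda>n::nat. 2 * log 2 (real n + 1) + 2 \<le> real n) at_top"
    by real_asymp+
  moreover have "eventually (\<lambda>n::nat. n \<ge> 2) at_top"
    by (rule eventually_ge_at_top)
  ultimately show "eventually (\<lambda>n. norm (\<Sum>t\<in>{t. bsize t \<le> n \<and> real (bsize t) \<ge> log 4 (real n)}.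
            1 - fps_nth (Sgf t) n / fps_nth Tgf n) \<ge> 1 * norm (sqrt (real n))) at_top"
  proof eventually_elim
    case (elim n)
    then show ?case
      using sum_one_minus_Sgf_div_Tgf_ge[of n] by simp
  qed
qed simp
end
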